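(* With the matrices defined in the context, $B\,Q_\beta=V_\beta\,B$; i.e. the diagram $C_1\xrightarrow{B}C_0$, $Q_\beta:C_1\to C_1$, $V_\beta:C_0\to C_0$, $C_1\xrightarrow{B}C_0$ commutes.
   Context: Setting. $I\subset\mathbb{R}$ compact interval; $f_i(x)=\rho_ix+\varrho_i$ ($i=1,\dots,n$), $0<|\rho_i|<1$, IFS with open set condition; $I$ is the union of a nonempty open interval $I_h$ (hole) and $f_1(I),\dots,f_n(I)$, with pairwise disjoint interiors and $I_h$ disjoint from the $f_i(I)$; $F(x)=f_i^{-1}(x)$ on $f_i(I)$. The laps and hole have endpoints $a_1<\dots<a_{n+2}$, hole $(a_h,a_{h+1})$; interior endpoints are turning/discontinuity points. Assume the forward orbit of every one-sided endpoint $a_i^\pm$ is finite. Markov partition: the orbit points and the $a_i$ cut $I$ into intervals $J_1,\dots,J_m$; $A=[a_{ij}]$, $a_{ij}=1$ iff $F(\mathrm{int}J_j)\supseteq\mathrm{int}J_i$; $Q_\beta=[a_{ij}|F'|_{J_j}|^{-\beta}]$, $\beta\in\mathbb{R}$. Points $y^{(1)},\dots,y^{(q)}$: the one-sided endpoints $a_1^+,a_2^-,a_2^+,\dots,a_{n+2}^-$ (with $a_i^-,a_i^+$ consecutive) together with all other points of their forward orbits, ordered along $I$; $C_0=\mathbb{R}^q$ with $y^{(i)}$ the $i$-th standard basis vector, $C_1=\mathbb{R}^m$ with basis $J_1,\dots,J_m$. $B$ is the $q\times m$ matrix with, in column $j$, $-1$ in row $i$ and $+1$ in row $i+1$ where $y^{(i)},y^{(i+1)}$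 are the lower and upper endpoints of $J_j$ (border map $\partial J_j=y^{(i+1)}-y^{(i)}$), other entries $0$. $V_\beta=[v_{ij}]$ ($q\times q$): if $F(y^{(j)})=y^{(i)}$, $v_{ij}=\varepsilon(y^{(j)})|F'(y^{(j)})|^{-\beta}$ with $\varepsilon$ the sign of $F'$ at $y^{(j)}$ (column zero for limits from inside the hole); for every pair of consecutive entries that are the two one-sided versions of a turning/discontinuity point between $y^{(j)}$ and $y^{(i)}$: if $y^{(i)}>y^{(j)}$, pair $y^{(k)},y^{(k+1)}$, $j\le k<i$, set $v_{kj}=v_{ij}$, $v_{k+1,j}=-v_{ij}$; if $y^{(i)}<y^{(j)}$, pair $y^{(k-1)},y^{(k)}$, $i<k\le j$, set $v_{k-1,j}=-v_{ij}$, $v_{kj}=v_{ij}$; all other entries $0$. *)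

theory Defs
  imports "HOL-Analysis.Analysis" "Jordan_Normal_Form.Matrix"
begin

definition ifs :: "(nat \<Rightarrow> real) \<Rightarrow> (nat \<Rightarrow> real) \<Rightarrow> nat \<Rightarrow> real \<Rightarrow> real" where
  "ifs rho vrho i x = rho i * x + vrho i"

definition finv :: "(nat \<Rightarrow> real) \<Rightarrow> (nat \<Rightarrow> real) \<Rightarrow> nat \<Rightarrow> real \<Rightarrow> real" where
  "finv rho vrho i x = (x - vrho i) / rho i"

text \<open>Points are pairs (x, s): s = 1 means x^+, s = -1 means x^-, s = 0 an ordinary
  (two-sided) point.  onlap i p: the point p (with its side) lies in lap f_i(I).\<close>
definition onlap :: "(nat \<Rightarrow> real) \<Rightarrow> (nat \<Rightarrow> real) \<Rightarrow> real \<Rightarrow> real \<Rightarrow> nat \<Rightarrow> real \<times> int \<Rightarrow> bool" where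
  "onlap rho vrho c d i p \<longleftrightarrow>
     fst p \<in> ifs rho vrho i ` {c..d} \<and>
     (snd p = 1 \<longrightarrow> (\<exists>e>0. {fst p..fst p + e} \<subseteq> ifs rho vrho i ` {c..d})) \<and>
     (snd p = -1 \<longrightarrow> (\<exists>e>0. {fst p - e..fst p} \<subseteq> ifs rho vrho i ` {c..d}))"

text \<open>Normal form: one-sided versions are kept only at the endpoints a_1,...,a_{n+2}.\<close>
definition nrm :: "(nat \<Rightarrow> real) \<Rightarrow> nat \<Rightarrow> real \<times> int \<Rightarrow> real \<times> int" where
  "nrm a n p = (if fst p \<in> a ` {2..n+1} then p
               else if fst p = a 1 then (fst p, 1)
               else if fst p = a (n+2) then (fst p, -1)
               else (fst p, 0))"

definition lapidx :: "(nat \<Rightarrow> real) \<Rightarrow> (nat \<Rightarrow> real) \<Rightarrow> real \<Rightarrow> real \<Rightarrow> nat \<Rightarrow> real \<times> int \<Rightarrow> nat" where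
  "lapidx rho vrho c d n p = (SOME i. i \<in> {1..n} \<and> onlap rho vrho c d i p)"

text \<open>The map F on (one-sided) points; None for points inside the hole.\<close>
definition Fpt :: "(nat \<Rightarrow> real) \<Rightarrow> (nat \<Rightarrow> real) \<Rightarrow> real \<Rightarrow> real \<Rightarrow> (nat \<Rightarrow> real) \<Rightarrow> nat
                   \<Rightarrow> real \<times> int \<Rightarrow> (real \<times> int) option" where
  "Fpt rho vrho c d a n p =
     (if \<exists>i\<in>{1..n}. onlap rho vrho c d i p then
        (let i = lapidx rho vrho c d n p in
         Some (nrm a n (finv rho vrho i (fst p), snd p * (if rho i > 0 then 1 else -1))))
      else None)"

definition orbit :: "(nat \<Rightarrow> real) \<Rightarrow> (nat \<Rightarrow> real) \<Rightarrow> real \<Rightarrow> real \<Rightarrow> (nat \<Rightarrow> real) \<Rightarrow> nat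
                   \<Rightarrow> real \<times> int \<Rightarrow> (real \<times> int) set" where
  "orbit rho vrho c d a n p =
     {p'. \<exists>k. ((\<lambda>z. Option.bind z (Fpt rho vrho c d a n)) ^^ k) (Some p) = Some p'}"

definition endpts :: "(nat \<Rightarrow> real) \<Rightarrow> nat \<Rightarrow> (real \<times> int) set" where
  "endpts a n = {(a 1, 1), (a (n+2), -1)} \<union> {(a k, s) | k s. k \<in> {2..n+1} \<and> s \<in> {-1, 1}}"

definition Yset :: "(nat \<Rightarrow> real) \<Rightarrow> (nat \<Rightarrow> real) \<Rightarrow> real \<Rightarrow> real \<Rightarrow> (nat \<Rightarrow> real) \<Rightarrow> nat
                   \<Rightarrow> (real \<times> int) set" where
  "Yset rho vrho c d a n = (\<Union>p\<in>endpts a n. orbit rho vrho c d a n p)"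

definition ptless :: "real \<times> int \<Rightarrow> real \<times> int \<Rightarrow> bool" where
  "ptless p p' \<longleftrightarrow> fst p < fst p' \<or> (fst p = fst p' \<and> snd p < snd p')"

text \<open>y^(1), ..., y^(q) ordered along I (x^- before x before x^+); index 0-based.\<close>
definition ylist :: "(nat \<Rightarrow> real) \<Rightarrow> (nat \<Rightarrow> real) \<Rightarrow> real \<Rightarrow> real \<Rightarrow> (nat \<Rightarrow> real) \<Rightarrow> nat
                   \<Rightarrow> (real \<times> int) list" where
  "ylist rho vrho c d a n = (THE ys. set ys = Yset rho vrho c d a n \<and> sorted_wrt ptless ys)"

text \<open>Markov partition points: orbit points and the a_i; J_j = [plist!j, plist!(j+1)].\<close>
definition plist :: "(nat \<Rightarrow> real) \<Rightarrow> (nat \<Rightarrow> real) \<Rightarrow> real \<Rightarrow> real \<Rightarrow> (nat \<Rightarrow> real) \<Rightarrow> nat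
                   \<Rightarrow> real list" where
  "plist rho vrho c d a n = sorted_list_of_set (fst ` Yset rho vrho c d a n \<union> a ` {1..n+2})"

definition Fimg :: "(nat \<Rightarrow> real) \<Rightarrow> (nat \<Rightarrow> real) \<Rightarrow> real \<Rightarrow> real \<Rightarrow> nat \<Rightarrow> real set \<Rightarrow> real set" where
  "Fimg rho vrho c d n S = (\<Union>i\<in>{1..n}. finv rho vrho i ` (S \<inter> ifs rho vrho i ` {c..d}))"

definition Qmat :: "(nat \<Rightarrow> real) \<Rightarrow> (nat \<Rightarrow> real) \<Rightarrow> real \<Rightarrow> real \<Rightarrow> (nat \<Rightarrow> real) \<Rightarrow> nat
                   \<Rightarrow> real \<Rightarrow> real mat" where
  "Qmat rho vrho c d a n \<beta> =
     (let P = plist rho vrho c d a n; m = length P - 1;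
          lapJ = (\<lambda>j. SOME i. i \<in> {1..n} \<and> {P!j..P!Suc j} \<subseteq> ifs rho vrho i ` {c..d})
      in mat m m (\<lambda>(i, j).
           if {P!i<..<P!Suc i} \<subseteq> Fimg rho vrho c d n {P!j<..<P!Suc j}
           then \<bar>1 / rho (lapJ j)\<bar> powr (-\<beta>) else 0))"

definition Bmat :: "(nat \<Rightarrow> real) \<Rightarrow> (nat \<Rightarrow> real) \<Rightarrow> real \<Rightarrow> real \<Rightarrow> (nat \<Rightarrow> real) \<Rightarrow> nat
                   \<Rightarrow> real mat" where
  "Bmat rho vrho c d a n =
     (let P = plist rho vrho c d a n; m = length P - 1; Y = ylist rho vrho c d a n; q = length Y
      in mat q m (\<lambda>(r, j).
           if Y!r = nrm a n (P!j, 1) then -1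
           else if Y!r = nrm a n (P!Suc j, -1) then 1 else 0))"

text \<open>pairAt Y r: Y!r, Y!(r+1) are the two one-sided versions of a turning/discontinuity point.\<close>
definition pairAt :: "(nat \<Rightarrow> real) \<Rightarrow> nat \<Rightarrow> (real \<times> int) list \<Rightarrow> nat \<Rightarrow> bool" where
  "pairAt a n Y r \<longleftrightarrow> Suc r < length Y \<and> fst (Y!r) = fst (Y!Suc r) \<and> fst (Y!r) \<in> a ` {2..n+1}
      \<and> snd (Y!r) = -1 \<and> snd (Y!Suc r) = 1"

definition Vmat :: "(nat \<Rightarrow> real) \<Rightarrow> (nat \<Rightarrow> real) \<Rightarrow> real \<Rightarrow> real \<Rightarrow> (nat \<Rightarrow> real) \<Rightarrow> nat
                   \<Rightarrow> real \<Rightarrow> real mat" where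
  "Vmat rho vrho c d a n \<beta> =
     (let Y = ylist rho vrho c d a n; q = length Y
      in mat q q (\<lambda>(r, j).
        if \<exists>i<q. Fpt rho vrho c d a n (Y!j) = Some (Y!i) then
          (let i = (THE i. i < q \<and> Fpt rho vrho c d a n (Y!j) = Some (Y!i));
               l = lapidx rho vrho c d n (Y!j);
               e = sgn (rho l) * \<bar>1 / rho l\<bar> powr (-\<beta>)
           in if r = i then e
              else if j < i then
                (if j \<le> r \<and> r < i \<and> pairAt a n Y r then e
                 else if 0 < r \<and> j \<le> r - 1 \<and> r - 1 < i \<and> pairAt a n Y (r - 1) then -e
                 else 0)
              else if i < j then
                (if i < r \<and> r \<le> j \<and> pairAt a n Y (r - 1) then e
                 else if i < r + 1 \<and> r + 1 \<le> j \<and> pairAt a n Y r then -e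
                 else 0)
              else 0)
        else 0))"

end

theory Submission
  imports Defs
begin

(* F maps every lap f_i(I) affinely onto the whole interval I, so it sends the one-sided
   endpoints of a lap to a_1^+ and a_{n+2}^- (in an order fixed by the sign of rho_i), and it is
   undefined at the one-sided endpoints of the hole.  Hence the points y^(r) are exactly the 2n+2
   one-sided endpoints, the Markov partition consists of the n laps and the hole, and every lap
   covers every J_i.  All three matrices are then explicit: B is the boundary matrix of a chain of
   intervals, column j of Q_beta is constant (|rho|^beta for a lap, 0 for the hole), and the column
   of V_beta of an endpoint telescopes to alternating signs below or above its image.  Both
   B Q_beta and V_beta B then have (r, j) entry -(-1)^r times column j of Q_beta. *)

lemma finv_ifs: "rho i \<noteq> 0 \<Longrightarrow> finv rho vrho i (ifs rho vrho i x) = x"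
  unfolding finv_def ifs_def by simp

lemma Fpt_eq_None:
  assumes "\<And>i. i \<in> {1..n} \<Longrightarrow> \<not> onlap rho vrho c d i p"
  shows "Fpt rho vrho c d a n p = None"
  using assms unfolding Fpt_def by auto

lemma Fpt_eq_Some:
  assumes "l \<in> {1..n}" "onlap rho vrho c d l p"
    and "\<And>i. i \<in> {1..n} \<Longrightarrow> onlap rho vrho c d i p \<Longrightarrow> i = l"
  shows "lapidx rho vrho c d n p = l"
    and "Fpt rho vrho c d a n p =
           Some (nrm a n (finv rho vrho l (fst p), snd p * (if rho l > 0 then 1 else -1)))"
proof -
  show idx: "lapidx rho vrho c d n p = l"
    unfolding lapidx_def
  proof (rule some_equality)
    show "l \<in> {1..n} \<and> onlap rho vrho c d l p"
      using assms(1,2) ..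
  qed (use assms(3) in blast)
  have "\<exists>i\<in>{1..n}. onlap rho vrho c d i p"
    using assms(1,2) ..
  then show "Fpt rho vrho c d a n p =
          Some (nrm a n (finv rho vrho l (fst p), snd p * (if rho l > 0 then 1 else -1)))"
    unfolding Fpt_def idx Let_def by (simp only: if_True)
qed

lemma sorted_wrt_asym_set_unique:
  assumes "sorted_wrt R xs" "sorted_wrt R ys" "set xs = set ys"
    and asym: "\<And>x y. R x y \<Longrightarrow> \<not> R y x"
  shows "xs = ys"
  using assms(1-3)
proof (induction xs arbitrary: ys)
  case Nil
  then show ?case by simp
next
  case (Cons x xs)
  then obtain y ys' where ys: "ys = y # ys'"
    by (cases ys) auto
  have irrefl: "\<not> R z z" for z
    using asym by blast
  have "x = y"
  proof (rule ccontr)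
    assume "x \<noteq> y"
    then have "R x y" "R y x"
      using Cons.prems ys by auto
    then show False
      using asym by blast
  qed
  moreover have "x \<notin> set xs" "y \<notin> set ys'"
    using Cons.prems ys irrefl by auto
  then have "set xs = set ys'"
    using Cons.prems ys \<open>x = y\<close> by auto
  ultimately show ?case
    using Cons ys by simp
qed

lemma iterate_bind_closed:
  assumes "p \<in> S" "\<And>q q'. q \<in> S \<Longrightarrow> f q = Some q' \<Longrightarrow> q' \<in> S"
  shows "((\<lambda>z. Option.bind z f) ^^ k) (Some p) \<in> insert None (Some ` S)"
proof (induction k)
  case (Suc k)
  then consider "((\<lambda>z. Option.bind z f) ^^ k) (Some p) = None"
    | q where "q \<in> S" "((\<lambda>z. Option.bind z f) ^^ k) (Some p) = Some q"
    by auto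
  then show ?case
  proof cases
    case (2 q)
    then show ?thesis
      using assms(2)[of q] by (cases "f q") auto
  qed simp
qed (use assms(1) in simp)

text \<open>The rule defining the column of V_beta of a point y^(k) with F(y^(k)) = y^(i) and entry e,
  for points y^(0), ..., y^(N) whose pairs of one-sided versions of a point are exactly the
  positions (r, r+1) with r odd.\<close>

definition pair_pattern :: "nat \<Rightarrow> nat \<Rightarrow> nat \<Rightarrow> nat \<Rightarrow> real \<Rightarrow> real" where
  "pair_pattern N i k r e =
     (if r = i then e
      else if k < i then
        (if k \<le> r \<and> r < i \<and> odd r \<and> r < N then e
         else if 0 < r \<and> k \<le> r - 1 \<and> r - 1 < i \<and> odd (r - 1) \<and> r - 1 < N then -e else 0)
      else if i < k then
        (if i < r \<and> r \<le> k \<and> odd (r - 1) \<and> r - 1 < N then e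
         else if i < r + 1 \<and> r + 1 \<le> k \<and> odd r \<and> r < N then -e else 0)
      else 0)"

lemma pair_pattern_to_first:
  assumes "k \<le> N"
  shows "pair_pattern N 0 k r e = (if r \<le> 2 * (k div 2) then (-1) ^ r * e else 0)"
proof -
  have "odd (r - 1) \<longleftrightarrow> even r" if "0 < r"
    using that by presburger
  moreover have "r \<le> 2 * (k div 2) \<longleftrightarrow> (if even r then r \<le> k else r < k)"
    by presburger
  ultimately show ?thesis
    using assms unfolding pair_pattern_def by (cases "even r") auto
qed

lemma pair_pattern_to_last:
  assumes "k \<le> N" "r \<le> N" "odd N"
  shows "pair_pattern N N k r e = (if 2 * (k div 2) < r then - ((-1) ^ r * e) else 0)"
proof -
  have "odd (r - 1) \<longleftrightarrow> even r" if "0 < r"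
    using that by presburger
  moreover have "2 * (k div 2) < r \<longleftrightarrow> (if even r then k < r else k \<le> r)"
    by presburger
  moreover have "r = N \<Longrightarrow> odd r" "k = N \<Longrightarrow> odd k"
    using assms(3) by simp_all
  ultimately show ?thesis
    using assms unfolding pair_pattern_def by (cases "even r") auto
qed

definition boundary_mat :: "nat \<Rightarrow> real mat" where
  "boundary_mat m = mat (2*m) m (\<lambda>(r, k). if r = 2*k then -1 else if r = 2*k+1 then 1 else 0)"

lemma mult_boundary_mat_index:
  assumes "M \<in> carrier_mat q (2*m)" "r < q" "j < m"
  shows "(M * boundary_mat m) $$ (r, j) = M $$ (r, 2*j+1) - M $$ (r, 2*j)"
proof -
  have "(M * boundary_mat m) $$ (r, j) = (\<Sum>k<2*m. M $$ (r, k) * boundary_mat m $$ (k, j))"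
    using assms by (simp add: boundary_mat_def scalar_prod_def lessThan_atLeast0)
  also have "\<dots> = (\<Sum>k<2*m. (if k = 2*j+1 then M $$ (r, 2*j+1) else 0)
                             - (if k = 2*j then M $$ (r, 2*j) else 0))"
    using assms by (intro sum.cong) (auto simp: boundary_mat_def)
  also have "\<dots> = M $$ (r, 2*j+1) - M $$ (r, 2*j)"
    using assms by (simp add: sum_subtractf)
  finally show ?thesis .
qed

lemma boundary_mat_mult_index:
  assumes "N \<in> carrier_mat m p" "r < 2*m" "j < p"
  shows "(boundary_mat m * N) $$ (r, j) = (if even r then -1 else 1) * N $$ (r div 2, j)"
proof -
  have "(boundary_mat m * N) $$ (r, j) = (\<Sum>k<m. boundary_mat m $$ (r, k) * N $$ (k, j))"
    using assms by (simp add: boundary_mat_def scalar_prod_def lessThan_atLeast0)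
  also have "\<dots> = (\<Sum>k<m. if k = r div 2 then (if even r then -1 else 1) * N $$ (r div 2, j) else 0)"
    using assms by (intro sum.cong) (auto simp: boundary_mat_def elim!: evenE oddE)
  also have "\<dots> = (if even r then -1 else 1) * N $$ (r div 2, j)"
    using assms by simp
  finally show ?thesis .
qed

section \<open>Geometry of the laps\<close>

locale ifs_with_hole =
  fixes n :: nat and rho vrho :: "nat \<Rightarrow> real" and c d :: real
    and a :: "nat \<Rightarrow> real" and h :: nat
  assumes rho_nonzero: "\<forall>i\<in>{1..n}. rho i \<noteq> 0"
    and a_strict_mono: "strict_mono_on {1..n+2} a"
    and hole_index: "h \<in> {1..n+1}"
    and interval_cover: "{c..d} = {a h<..<a (h+1)} \<union> (\<Union>i\<in>{1..n}. ifs rho vrho i ` {c..d})"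
    and laps_interior_disjoint: "\<forall>i\<in>{1..n}. \<forall>j\<in>{1..n}. i \<noteq> j \<longrightarrow>
           interior (ifs rho vrho i ` {c..d}) \<inter> interior (ifs rho vrho j ` {c..d}) = {}"
    and hole_lap_disjoint: "\<forall>i\<in>{1..n}. {a h<..<a (h+1)} \<inter> ifs rho vrho i ` {c..d} = {}"
    and breakpoints_eq: "a ` {1..n+2} = {a h, a (h+1)} \<union> (\<Union>i\<in>{1..n}. {ifs rho vrho i c, ifs rho vrho i d})"
begin

definition lap :: "nat \<Rightarrow> real set" where
  "lap i = ifs rho vrho i ` {c..d}"

definition lap_lo :: "nat \<Rightarrow> real" where
  "lap_lo i = min (ifs rho vrho i c) (ifs rho vrho i d)"

definition lap_hi :: "nat \<Rightarrow> real" where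
  "lap_hi i = max (ifs rho vrho i c) (ifs rho vrho i d)"

lemma a_less_iff: "p \<in> {1..n+2} \<Longrightarrow> k \<in> {1..n+2} \<Longrightarrow> a p < a k \<longleftrightarrow> p < k"
  using strict_mono_on_less[OF a_strict_mono] by blast

lemma a_le_iff: "p \<in> {1..n+2} \<Longrightarrow> k \<in> {1..n+2} \<Longrightarrow> a p \<le> a k \<longleftrightarrow> p \<le> k"
  using strict_mono_on_less_eq[OF a_strict_mono] by blast

lemma a_eq_iff: "p \<in> {1..n+2} \<Longrightarrow> k \<in> {1..n+2} \<Longrightarrow> a p = a k \<longleftrightarrow> p = k"
  using strict_mono_on_eqD[OF a_strict_mono] by blast

lemma hole_nonempty: "a h < a (h+1)"
  using hole_index by (subst a_less_iff) auto

lemma hole_subset: "{a h<..<a (h+1)} \<subseteq> {c..d}"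
  using interval_cover by blast

lemma hole_bounds: "c \<le> a h" "a (h+1) \<le> d"
proof -
  have "{a h..a (h+1)} \<subseteq> {c..d}"
    using closure_minimal[OF hole_subset] hole_nonempty by simp
  then show "c \<le> a h" "a (h+1) \<le> d"
    using hole_nonempty by auto
qed

lemma c_less_d: "c < d"
  using hole_bounds hole_nonempty by linarith

lemma lap_eq: "lap i = {lap_lo i..lap_hi i}"
  using c_less_d
  by (auto simp: lap_def lap_lo_def lap_hi_def ifs_def image_affinity_atLeastAtMost
      mult_left_mono mult_left_mono_neg min_def max_def)

lemma lap_lo_less_hi: "i \<in> {1..n} \<Longrightarrow> lap_lo i < lap_hi i"
proof -
  assume "i \<in> {1..n}"
  then have "ifs rho vrho i c \<noteq> ifs rho vrho i d"
    using rho_nonzero c_less_d by (auto simp: ifs_def)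
  then show ?thesis
    by (auto simp: lap_lo_def lap_hi_def min_def max_def)
qed

lemma lap_interior: "interior (lap i) = {lap_lo i<..<lap_hi i}"
  by (simp add: lap_eq)

lemma lap_subset: "i \<in> {1..n} \<Longrightarrow> lap i \<subseteq> {c..d}"
  using interval_cover unfolding lap_def by blast

lemma breakpoint_cases:
  assumes "x \<in> a ` {1..n+2}"
  obtains "x = a h" | "x = a (h+1)" | i where "i \<in> {1..n}" "x = lap_lo i \<or> x = lap_hi i"
  using assms unfolding breakpoints_eq lap_lo_def lap_hi_def min_def max_def by auto

lemma lap_lo_breakpoint: "i \<in> {1..n} \<Longrightarrow> lap_lo i \<in> a ` {1..n+2}"
  and lap_hi_breakpoint: "i \<in> {1..n} \<Longrightarrow> lap_hi i \<in> a ` {1..n+2}"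
  unfolding breakpoints_eq lap_lo_def lap_hi_def min_def max_def by auto

lemma breakpoint_bounds: "x \<in> a ` {1..n+2} \<Longrightarrow> c \<le> x \<and> x \<le> d"
proof (elim breakpoint_cases)
  fix i assume "i \<in> {1..n}" "x = lap_lo i \<or> x = lap_hi i"
  then show ?thesis
    using lap_subset[of i] lap_eq[of i] lap_lo_less_hi[of i] by auto
qed (use hole_bounds hole_nonempty in auto)

lemma a_bounds: "k \<in> {1..n+2} \<Longrightarrow> c \<le> a k \<and> a k \<le> d"
  by (rule breakpoint_bounds) simp

lemma point_in_lap:
  assumes "x \<in> {c..d}" "x \<notin> {a h<..<a (h+1)}"
  obtains i where "i \<in> {1..n}" "lap_lo i \<le> x" "x \<le> lap_hi i"
proof -
  from assms obtain i where "i \<in> {1..n}" "x \<in> lap i"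
    using interval_cover unfolding lap_def by blast
  then show thesis
    using that lap_eq by auto
qed

lemma a_first: "a 1 = c"
proof -
  obtain i where i: "i \<in> {1..n}" "lap_lo i \<le> c"
    using point_in_lap[of c] c_less_d hole_bounds by auto
  obtain k where k: "k \<in> {1..n+2}" "lap_lo i = a k"
    using lap_lo_breakpoint[OF i(1)] by auto
  have "a 1 \<le> a k"
    using k(1) by (subst a_le_iff) auto
  then show ?thesis
    using i k a_bounds[of 1] by auto
qed

lemma a_last: "a (n+2) = d"
proof -
  obtain i where i: "i \<in> {1..n}" "d \<le> lap_hi i"
    using point_in_lap[of d] c_less_d hole_bounds by auto
  obtain k where k: "k \<in> {1..n+2}" "lap_hi i = a k"
    using lap_hi_breakpoint[OF i(1)] by auto
  have "a k \<le> a (n+2)"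
    using k(1) by (subst a_le_iff) auto
  then show ?thesis
    using i k a_bounds[of "n+2"] by auto
qed

lemma lap_eq_if_interiors_meet:
  assumes "i \<in> {1..n}" "j \<in> {1..n}" "t \<in> {lap_lo i<..<lap_hi i}" "t \<in> {lap_lo j<..<lap_hi j}"
  shows "i = j"
  using assms laps_interior_disjoint lap_interior unfolding lap_def by blast

lemma lap_eq_if_starts_at:
  assumes "i \<in> {1..n}" "l \<in> {1..n}" "lap_lo i \<le> x" "x < lap_hi i" "lap_lo l = x"
  shows "i = l"
proof -
  obtain t where "x < t" "t < min (lap_hi i) (lap_hi l)"
    using dense assms lap_lo_less_hi[OF assms(2)] by (metis min_less_iff_conj)
  then show ?thesis
    using lap_eq_if_interiors_meet[OF assms(1,2), of t] assms by auto
qed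

lemma lap_eq_if_ends_at:
  assumes "i \<in> {1..n}" "l \<in> {1..n}" "lap_lo i < x" "x \<le> lap_hi i" "lap_hi l = x"
  shows "i = l"
proof -
  obtain t where "max (lap_lo i) (lap_lo l) < t" "t < x"
    using dense assms lap_lo_less_hi[OF assms(2)] by (metis max_less_iff_conj)
  then show ?thesis
    using lap_eq_if_interiors_meet[OF assms(1,2), of t] assms by auto
qed

lemma no_lap_after_hole_start:
  assumes "i \<in> {1..n}" "lap_lo i \<le> a h" "a h < lap_hi i"
  shows False
proof -
  obtain t where "a h < t" "t < min (lap_hi i) (a (h+1))"
    using dense assms hole_nonempty by (metis min_less_iff_conj)
  then have "t \<in> {a h<..<a (h+1)} \<inter> lap i"
    using assms lap_eq[of i] by auto
  then show False
    using hole_lap_disjoint assms(1) unfolding lap_def by blast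
qed

lemma no_lap_before_hole_end:
  assumes "i \<in> {1..n}" "lap_lo i < a (h+1)" "a (h+1) \<le> lap_hi i"
  shows False
proof -
  obtain t where "max (lap_lo i) (a h) < t" "t < a (h+1)"
    using dense assms hole_nonempty by (metis max_less_iff_conj)
  then have "t \<in> {a h<..<a (h+1)} \<inter> lap i"
    using assms lap_eq[of i] by auto
  then show False
    using hole_lap_disjoint assms(1) unfolding lap_def by blast
qed

lemma breakpoint_not_inside_lap:
  assumes "i \<in> {1..n}" "x \<in> a ` {1..n+2}" "lap_lo i < x" "x < lap_hi i"
  shows False
  using assms(2)
proof (cases rule: breakpoint_cases)
  case 1
  then show False
    using no_lap_after_hole_start[OF assms(1)] assms(3,4) by simp
next
  case 2
  then show False
    using no_lap_before_hole_end[OF assms(1)] assms(3,4) by simp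
next
  case (3 j)
  then show False
    using lap_eq_if_starts_at[OF assms(1) 3(1)] lap_eq_if_ends_at[OF assms(1) 3(1)] assms by force
qed

text \<open>Indices are 0-based: gap j is [a_(j+1), a_(j+2)], and it is the hole iff j + 1 = h.\<close>

lemma gap_is_lap:
  assumes j: "j \<le> n" "j + 1 \<noteq> h"
  shows "\<exists>l\<in>{1..n}. lap_lo l = a (j+1) \<and> lap_hi l = a (j+2)"
proof -
  define m where "m = (a (j+1) + a (j+2)) / 2"
  have gap: "a (j+1) < a (j+2)"
    using j by (subst a_less_iff) auto
  then have m: "a (j+1) < m" "m < a (j+2)"
    by (auto simp: m_def)
  have "m \<in> {c..d}"
    using a_bounds[of "j+1"] a_bounds[of "j+2"] j m by auto
  moreover have "m \<notin> {a h<..<a (h+1)}"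
  proof (cases "h < j + 1")
    case True
    then have "a (h+1) \<le> a (j+1)"
      using hole_index j by (subst a_le_iff) auto
    then show ?thesis using m by auto
  next
    case False
    then have "a (j+2) \<le> a h"
      using hole_index j by (subst a_le_iff) auto
    then show ?thesis using m by auto
  qed
  ultimately obtain l where l: "l \<in> {1..n}" "lap_lo l \<le> m" "m \<le> lap_hi l"
    by (rule point_in_lap)
  obtain p where p: "p \<in> {1..n+2}" "lap_lo l = a p"
    using lap_lo_breakpoint[OF l(1)] by auto
  obtain q where q: "q \<in> {1..n+2}" "lap_hi l = a q"
    using lap_hi_breakpoint[OF l(1)] by auto
  have "p < j + 2"
    using p l m j a_less_iff[of p "j+2"] by auto
  then have "lap_lo l \<le> a (j+1)"
    using p j by (subst p(2), subst a_le_iff) auto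
  moreover have "\<not> lap_lo l < a (j+1)"
    using breakpoint_not_inside_lap[OF l(1), of "a (j+1)"] l m j by auto
  ultimately have lo: "lap_lo l = a (j+1)"
    by simp
  have "j + 1 < q"
    using q l m j a_less_iff[of "j+1" q] by auto
  then have "a (j+2) \<le> lap_hi l"
    using q j by (subst q(2), subst a_le_iff) auto
  moreover have "\<not> a (j+2) < lap_hi l"
    using breakpoint_not_inside_lap[OF l(1), of "a (j+2)"] l m j by auto
  ultimately have "lap_hi l = a (j+2)"
    by simp
  then show ?thesis
    using l(1) lo by blast
qed

definition gap_lap :: "nat \<Rightarrow> nat" where
  "gap_lap j = (SOME l. l \<in> {1..n} \<and> lap_lo l = a (j+1) \<and> lap_hi l = a (j+2))"

lemma gap_lap:
  assumes "j \<le> n" "j + 1 \<noteq> h"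
  shows "gap_lap j \<in> {1..n}" "lap_lo (gap_lap j) = a (j+1)" "lap_hi (gap_lap j) = a (j+2)"
  using someI_ex[OF gap_is_lap[OF assms, unfolded Bex_def]] unfolding gap_lap_def by auto

section \<open>The map F on the one-sided endpoints\<close>

lemma onlap_right_iff: "onlap rho vrho c d i (x, 1) \<longleftrightarrow> lap_lo i \<le> x \<and> x < lap_hi i"
proof -
  have "onlap rho vrho c d i (x, 1) \<longleftrightarrow> x \<in> lap i \<and> (\<exists>e>0. {x..x+e} \<subseteq> lap i)"
    unfolding onlap_def lap_def by simp
  also have "\<dots> \<longleftrightarrow> lap_lo i \<le> x \<and> x < lap_hi i"
    unfolding lap_eq by (auto intro!: exI[of _ "lap_hi i - x"])
  finally show ?thesis .
qed

lemma onlap_left_iff: "onlap rho vrho c d i (x, -1) \<longleftrightarrow> lap_lo i < x \<and> x \<le> lap_hi i"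
proof -
  have "onlap rho vrho c d i (x, -1) \<longleftrightarrow> x \<in> lap i \<and> (\<exists>e>0. {x-e..x} \<subseteq> lap i)"
    unfolding onlap_def lap_def by simp
  also have "\<dots> \<longleftrightarrow> lap_lo i < x \<and> x \<le> lap_hi i"
    unfolding lap_eq by (auto intro!: exI[of _ "x - lap_lo i"])
  finally show ?thesis .
qed

lemma lap_lo_eq: "i \<in> {1..n} \<Longrightarrow> lap_lo i = ifs rho vrho i (if 0 < rho i then c else d)"
  and lap_hi_eq: "i \<in> {1..n} \<Longrightarrow> lap_hi i = ifs rho vrho i (if 0 < rho i then d else c)"
proof -
  assume "i \<in> {1..n}"
  then have "0 < rho i \<or> rho i < 0"
    using rho_nonzero by force
  moreover have "0 < rho i \<Longrightarrow> ifs rho vrho i c < ifs rho vrho i d"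
    using c_less_d by (simp add: ifs_def)
  moreover have "rho i < 0 \<Longrightarrow> ifs rho vrho i d < ifs rho vrho i c"
    using c_less_d by (simp add: ifs_def)
  ultimately show "lap_lo i = ifs rho vrho i (if 0 < rho i then c else d)"
    and "lap_hi i = ifs rho vrho i (if 0 < rho i then d else c)"
    unfolding lap_lo_def lap_hi_def by auto
qed

lemma finv_lap_lo: "i \<in> {1..n} \<Longrightarrow> finv rho vrho i (lap_lo i) = (if 0 < rho i then c else d)"
  and finv_lap_hi: "i \<in> {1..n} \<Longrightarrow> finv rho vrho i (lap_hi i) = (if 0 < rho i then d else c)"
  using rho_nonzero by (simp_all add: lap_lo_eq lap_hi_eq finv_ifs)

lemma nrm_first: "nrm a n (a 1, s) = (a 1, 1)"
proof -
  have "a 1 \<noteq> a k" if "k \<in> {2..n+1}" for k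
    using that a_eq_iff[of 1 k] by simp
  then have "a 1 \<notin> a ` {2..n+1}"
    by blast
  then show ?thesis
    unfolding nrm_def by simp
qed

lemma nrm_last: "nrm a n (a (n+2), s) = (a (n+2), -1)"
proof -
  have "a (n+2) \<noteq> a k" if "k \<in> {2..n+1}" for k
    using that a_eq_iff[of "n+2" k] by simp
  moreover have "a (n+2) \<noteq> a 1"
    using a_eq_iff[of "n+2" 1] by simp
  ultimately have "a (n+2) \<notin> a ` {2..n+1}" "a (n+2) \<noteq> a 1"
    by blast+
  then show ?thesis
    unfolding nrm_def by simp
qed

lemma nrm_inner: "k \<in> {2..n+1} \<Longrightarrow> nrm a n (a k, s) = (a k, s)"
  unfolding nrm_def by simp

text \<open>ypt r is y^(r+1) of the list a_1^+, a_2^-, a_2^+, ..., a_(n+2)^-, so even r gives the left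
  and odd r the right endpoint of gap r div 2.\<close>

definition ypt :: "nat \<Rightarrow> real \<times> int" where
  "ypt r = (a ((r + 1) div 2 + 1), if even r then 1 else -1)"

lemma ypt_even: "ypt (2*j) = (a (j+1), 1)"
  and ypt_odd: "ypt (2*j+1) = (a (j+2), -1)"
  unfolding ypt_def by simp_all

lemma ypt_eq_iff: "r < 2*n+2 \<Longrightarrow> r' < 2*n+2 \<Longrightarrow> ypt r = ypt r' \<longleftrightarrow> r = r'"
  unfolding ypt_def by (auto simp: a_eq_iff split: if_splits) presburger+

lemma nrm_lap_start: "j \<le> n \<Longrightarrow> nrm a n (a (j+1), 1) = ypt (2*j)"
  unfolding ypt_even using nrm_first nrm_inner[of "j+1"] by (cases "j = 0") simp_all

lemma nrm_lap_end: "j \<le> n \<Longrightarrow> nrm a n (a (j+2), -1) = ypt (2*j+1)"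
  unfolding ypt_odd using nrm_last nrm_inner[of "j+2"] by (cases "j = n") simp_all

lemma Fpt_hole_start: "Fpt rho vrho c d a n (a h, 1) = None"
  using no_lap_after_hole_start by (intro Fpt_eq_None) (auto simp: onlap_right_iff)

lemma Fpt_hole_end: "Fpt rho vrho c d a n (a (h+1), -1) = None"
  using no_lap_before_hole_end by (intro Fpt_eq_None) (auto simp: onlap_left_iff)

lemma Fpt_gap_start:
  assumes "j \<le> n" "j + 1 \<noteq> h"
  shows "lapidx rho vrho c d n (a (j+1), 1) = gap_lap j"
    and "Fpt rho vrho c d a n (a (j+1), 1) = Some (ypt (if 0 < rho (gap_lap j) then 0 else 2*n+1))"
proof -
  note l = gap_lap[OF assms]
  have on: "onlap rho vrho c d (gap_lap j) (a (j+1), 1)"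
    using l lap_lo_less_hi[OF l(1)] by (simp add: onlap_right_iff)
  have uniq: "i = gap_lap j" if "i \<in> {1..n}" "onlap rho vrho c d i (a (j+1), 1)" for i
    using that lap_eq_if_starts_at[OF that(1) l(1)] l(2) by (simp add: onlap_right_iff)
  show "lapidx rho vrho c d n (a (j+1), 1) = gap_lap j"
    using Fpt_eq_Some(1)[OF l(1) on uniq] .
  have "finv rho vrho (gap_lap j) (a (j+1)) = (if 0 < rho (gap_lap j) then a 1 else a (n+2))"
    using finv_lap_lo[OF l(1)] l(2) a_first a_last by simp
  then show "Fpt rho vrho c d a n (a (j+1), 1) = Some (ypt (if 0 < rho (gap_lap j) then 0 else 2*n+1))"
    using Fpt_eq_Some(2)[OF l(1) on uniq] nrm_lap_start[of 0] nrm_lap_end[of n] by simp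
qed

lemma Fpt_gap_end:
  assumes "j \<le> n" "j + 1 \<noteq> h"
  shows "lapidx rho vrho c d n (a (j+2), -1) = gap_lap j"
    and "Fpt rho vrho c d a n (a (j+2), -1) = Some (ypt (if 0 < rho (gap_lap j) then 2*n+1 else 0))"
proof -
  note l = gap_lap[OF assms]
  have on: "onlap rho vrho c d (gap_lap j) (a (j+2), -1)"
    using l lap_lo_less_hi[OF l(1)] by (simp add: onlap_left_iff)
  have uniq: "i = gap_lap j" if "i \<in> {1..n}" "onlap rho vrho c d i (a (j+2), -1)" for i
    using that lap_eq_if_ends_at[OF that(1) l(1)] l(3) by (simp add: onlap_left_iff)
  show "lapidx rho vrho c d n (a (j+2), -1) = gap_lap j"
    using Fpt_eq_Some(1)[OF l(1) on uniq] .
  have "finv rho vrho (gap_lap j) (a (j+2)) = (if 0 < rho (gap_lap j) then a (n+2) else a 1)"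
    using finv_lap_hi[OF l(1)] l(3) a_first a_last by simp
  then show "Fpt rho vrho c d a n (a (j+2), -1) = Some (ypt (if 0 < rho (gap_lap j) then 2*n+1 else 0))"
    using Fpt_eq_Some(2)[OF l(1) on uniq] nrm_lap_start[of 0] nrm_lap_end[of n] by simp
qed

text \<open>F maps the endpoint ypt k of a lap onto the endpoint ypt (target k) of I, which is a_1^+ or
  a_(n+2)^- depending on the orientation of the lap.\<close>

definition target :: "nat \<Rightarrow> nat" where
  "target k = (if (0 < rho (gap_lap (k div 2))) = even k then 0 else 2*n+1)"

lemma target_less: "target k < 2*n+2"
  unfolding target_def by simp

lemma Fpt_ypt:
  assumes "k < 2*n+2"
  shows "Fpt rho vrho c d a n (ypt k) = (if k div 2 + 1 = h then None else Some (ypt (target k)))"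
    and "k div 2 + 1 \<noteq> h \<Longrightarrow> lapidx rho vrho c d n (ypt k) = gap_lap (k div 2)"
proof -
  define j where "j = k div 2"
  have j: "j \<le> n"
    using assms unfolding j_def by simp
  consider "k = 2*j" "ypt k = (a (j+1), 1)" | "k = 2*j+1" "ypt k = (a (j+2), -1)"
    unfolding j_def ypt_def by (cases "even k") auto
  then have "Fpt rho vrho c d a n (ypt k) = (if j + 1 = h then None else Some (ypt (target k)))
      \<and> (j + 1 \<noteq> h \<longrightarrow> lapidx rho vrho c d n (ypt k) = gap_lap j)"
  proof cases
    case 1
    then have "target k = (if 0 < rho (gap_lap j) then 0 else 2*n+1)"
      unfolding target_def by simp
    then show ?thesis
      using 1 Fpt_hole_start Fpt_gap_start[OF j] by auto
  next
    case 2
    then have "target k = (if 0 < rho (gap_lap j) then 2*n+1 else 0)"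
      unfolding target_def by simp
    then show ?thesis
      using 2 Fpt_hole_end Fpt_gap_end[OF j] by auto
  qed
  then show "Fpt rho vrho c d a n (ypt k) = (if k div 2 + 1 = h then None else Some (ypt (target k)))"
    and "k div 2 + 1 \<noteq> h \<Longrightarrow> lapidx rho vrho c d n (ypt k) = gap_lap (k div 2)"
    unfolding j_def by simp_all
qed

section \<open>Orbits of the endpoints and the Markov partition\<close>

lemma ypt_image: "ypt ` {..<2*n+2} = (\<lambda>k. (a k, 1)) ` {1..n+1} \<union> (\<lambda>k. (a k, -1)) ` {2..n+2}"
proof (intro equalityI subsetI)
  fix p assume "p \<in> ypt ` {..<2*n+2}"
  then obtain r where r: "r < 2*n+2" "p = ypt r"
    by auto
  show "p \<in> (\<lambda>k. (a k, 1)) ` {1..n+1} \<union> (\<lambda>k. (a k, -1)) ` {2..n+2}"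
  proof (cases "even r")
    case True
    then obtain j where "r = 2*j" by blast
    then have "p = (a (j+1), 1)" "j + 1 \<in> {1..n+1}"
      using r ypt_even by auto
    then show ?thesis by blast
  next
    case False
    then obtain j where "r = 2*j+1" using oddE by blast
    then have "p = (a (j+2), -1)" "j + 2 \<in> {2..n+2}"
      using r ypt_odd by auto
    then show ?thesis by blast
  qed
next
  fix p :: "real \<times> int"
  assume "p \<in> (\<lambda>k. (a k, 1)) ` {1..n+1} \<union> (\<lambda>k. (a k, -1)) ` {2..n+2}"
  then consider k where "k \<in> {1..n+1}" "p = (a k, 1)" | k where "k \<in> {2..n+2}" "p = (a k, -1)"
    by blast
  then show "p \<in> ypt ` {..<2*n+2}"
  proof cases
    case (1 k)
    then have "p = ypt (2*(k-1))" "2*(k-1) < 2*n+2"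
      using ypt_even[of "k-1"] by auto
    then show ?thesis by blast
  next
    case (2 k)
    then have "k - 2 + 2 = k"
      by arith
    then have "p = ypt (2*(k-2)+1)" "2*(k-2)+1 < 2*n+2"
      using 2 ypt_odd[of "k-2"] by auto
    then show ?thesis by blast
  qed
qed

lemma endpts_eq: "endpts a n = ypt ` {..<2*n+2}"
proof -
  have "{(a k, s) |k s. k \<in> {2..n+1} \<and> s \<in> {-1, 1}}
      = (\<lambda>k. (a k, 1)) ` {2..n+1} \<union> (\<lambda>k. (a k, -1)) ` {2..n+1}"
    by auto
  moreover have "{1..n+1} = insert 1 {2..n+1}" "{2..n+2} = insert (n+2) {2..n+1}"
    by auto
  ultimately show ?thesis
    unfolding ypt_image endpts_def by (simp only: image_insert) blast
qed

lemma Fpt_ypt_closed: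
  assumes "q \<in> ypt ` {..<2*n+2}" "Fpt rho vrho c d a n q = Some q'"
  shows "q' \<in> ypt ` {..<2*n+2}"
proof -
  obtain k where "k < 2*n+2" "q = ypt k"
    using assms(1) by auto
  then have "q' = ypt (target k)"
    using assms(2) Fpt_ypt(1) by (simp split: if_splits)
  then show ?thesis
    using target_less by blast
qed

lemma Yset_eq: "Yset rho vrho c d a n = ypt ` {..<2*n+2}"
proof -
  have "orbit rho vrho c d a n p \<subseteq> ypt ` {..<2*n+2}" if "p \<in> ypt ` {..<2*n+2}" for p
  proof
    fix q assume "q \<in> orbit rho vrho c d a n p"
    then obtain k where "((\<lambda>z. Option.bind z (Fpt rho vrho c d a n)) ^^ k) (Some p) = Some q"
      unfolding orbit_def by blast
    moreover have "((\<lambda>z. Option.bind z (Fpt rho vrho c d a n)) ^^ k) (Some p)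
        \<in> insert None (Some ` ypt ` {..<2*n+2})"
      using that Fpt_ypt_closed by (rule iterate_bind_closed)
    ultimately show "q \<in> ypt ` {..<2*n+2}"
      by auto
  qed
  moreover have "p \<in> orbit rho vrho c d a n p" for p
    unfolding orbit_def by (auto intro: exI[of _ 0])
  ultimately show ?thesis
    unfolding Yset_def endpts_eq by blast
qed

lemma ptless_ypt:
  assumes "i < j" "j < 2*n+2"
  shows "ptless (ypt i) (ypt j)"
proof (cases "(i+1) div 2 = (j+1) div 2")
  case True
  then have "odd i" "even j"
    using assms(1) by presburger+
  then show ?thesis
    using True unfolding ptless_def ypt_def by simp
next
  case False
  then have "(i+1) div 2 + 1 < (j+1) div 2 + 1"
    using assms(1) div_le_mono[of "i+1" "j+1" 2] by simp
  then have "a ((i+1) div 2 + 1) < a ((j+1) div 2 + 1)"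
    using assms by (subst a_less_iff) auto
  then show ?thesis
    unfolding ptless_def ypt_def by simp
qed

lemma ylist_eq: "ylist rho vrho c d a n = map ypt [0..<2*n+2]"
proof -
  have sorted: "sorted_wrt ptless (map ypt [0..<2*n+2])"
    unfolding sorted_wrt_map
    by (rule sorted_wrt_mono_rel[OF _ sorted_wrt_upt]) (simp add: ptless_ypt del: upt_Suc)
  have asym: "ptless p q \<Longrightarrow> \<not> ptless q p" for p q
    unfolding ptless_def by auto
  show ?thesis
    unfolding ylist_def
  proof (rule the_equality)
    show "set (map ypt [0..<2*n+2]) = Yset rho vrho c d a n \<and> sorted_wrt ptless (map ypt [0..<2*n+2])"
      using sorted unfolding Yset_eq by (simp add: lessThan_atLeast0 del: upt_Suc)
  next
    fix ys assume "set ys = Yset rho vrho c d a n \<and> sorted_wrt ptless ys"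
    then show "ys = map ypt [0..<2*n+2]"
      using sorted asym sorted_wrt_asym_set_unique[of ptless ys "map ypt [0..<2*n+2]"]
      unfolding Yset_eq by (simp add: lessThan_atLeast0 del: upt_Suc)
  qed
qed

lemma plist_eq: "plist rho vrho c d a n = map a [1..<n+3]"
proof -
  have "fst ` Yset rho vrho c d a n \<subseteq> a ` {1..n+2}"
    unfolding Yset_eq ypt_image by auto
  then have "fst ` Yset rho vrho c d a n \<union> a ` {1..n+2} = set (map a [1..<n+3])"
    by auto
  moreover have "sorted_wrt (<) (map a [1..<n+3])"
    unfolding sorted_wrt_map
    by (rule sorted_wrt_mono_rel[OF _ sorted_wrt_upt]) (simp add: a_less_iff)
  ultimately show ?thesis
    unfolding plist_def by (metis sorted_list_of_set.idem_if_sorted_distinct strict_sorted_iff)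
qed

lemma length_ylist: "length (ylist rho vrho c d a n) = 2*n+2"
  and nth_ylist: "r < 2*n+2 \<Longrightarrow> ylist rho vrho c d a n ! r = ypt r"
  unfolding ylist_eq by (simp_all del: upt_Suc)

lemma length_plist: "length (plist rho vrho c d a n) = n+2"
  and nth_plist: "j < n+2 \<Longrightarrow> plist rho vrho c d a n ! j = a (j+1)"
  unfolding plist_eq by (simp_all del: upt_Suc)

lemma Bmat_eq: "Bmat rho vrho c d a n = boundary_mat (n+1)"
proof -
  have "(if ylist rho vrho c d a n ! r = nrm a n (plist rho vrho c d a n ! j, 1) then -1
         else if ylist rho vrho c d a n ! r = nrm a n (plist rho vrho c d a n ! Suc j, -1) then 1
         else 0)
      = (if r = 2*j then -1 else if r = 2*j+1 then 1 else (0::real))"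
    if "r < 2*n+2" "j < n+1" for r j
  proof -
    have P: "plist rho vrho c d a n ! j = a (j+1)" "plist rho vrho c d a n ! Suc j = a (j+2)"
      using nth_plist[of j] nth_plist[of "Suc j"] that by simp_all
    have "nrm a n (plist rho vrho c d a n ! j, 1) = ypt (2*j)"
      "nrm a n (plist rho vrho c d a n ! Suc j, -1) = ypt (2*j+1)"
      unfolding P using nrm_lap_start[of j] nrm_lap_end[of j] that by simp_all
    moreover have "ypt r = ypt (2*j) \<longleftrightarrow> r = 2*j" "ypt r = ypt (2*j+1) \<longleftrightarrow> r = 2*j+1"
      using that ypt_eq_iff by simp_all
    ultimately show ?thesis
      using that nth_ylist by simp
  qed
  then show ?thesis
    unfolding Bmat_def boundary_mat_def Let_def length_ylist length_plist
    by (intro cong_mat) auto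
qed

lemma ifs_mem_lap_interior:
  assumes "l \<in> {1..n}" "t \<in> {c<..<d}"
  shows "ifs rho vrho l t \<in> {lap_lo l<..<lap_hi l}"
proof -
  have "0 < rho l \<or> rho l < 0"
    using rho_nonzero assms(1) by force
  then show ?thesis
    using assms(2) lap_lo_eq[OF assms(1)] lap_hi_eq[OF assms(1)]
    by (auto simp: ifs_def mult_strict_left_mono mult_strict_left_mono_neg)
qed

lemma Fimg_hole: "Fimg rho vrho c d n {a h<..<a (h+1)} = {}"
  unfolding Fimg_def using hole_lap_disjoint by auto

lemma Fimg_gap:
  assumes "j \<le> n" "j + 1 \<noteq> h"
  shows "{c<..<d} \<subseteq> Fimg rho vrho c d n {a (j+1)<..<a (j+2)}"
proof
  fix t assume t: "t \<in> {c<..<d}"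
  note l = gap_lap[OF assms]
  let ?s = "ifs rho vrho (gap_lap j) t"
  have "?s \<in> {a (j+1)<..<a (j+2)} \<inter> ifs rho vrho (gap_lap j) ` {c..d}"
    using ifs_mem_lap_interior[OF l(1) t] l t by auto
  moreover have "t = finv rho vrho (gap_lap j) ?s"
    using rho_nonzero l(1) finv_ifs by auto
  ultimately show "t \<in> Fimg rho vrho c d n {a (j+1)<..<a (j+2)}"
    unfolding Fimg_def using l(1) by blast
qed

lemma gap_covered_iff:
  assumes "i \<le> n" "j \<le> n"
  shows "{a (i+1)<..<a (i+2)} \<subseteq> Fimg rho vrho c d n {a (j+1)<..<a (j+2)} \<longleftrightarrow> j + 1 \<noteq> h"
proof -
  have "a (i+1) < a (i+2)"
    using assms by (subst a_less_iff) auto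
  then have "{a (i+1)<..<a (i+2)} \<noteq> {}"
    by simp
  moreover have "{a (i+1)<..<a (i+2)} \<subseteq> {c<..<d}"
    using a_bounds[of "i+1"] a_bounds[of "i+2"] assms by auto
  ultimately show ?thesis
    using Fimg_hole Fimg_gap[OF assms(2)] by fastforce
qed

lemma gap_lap_unique:
  assumes "j \<le> n" "j + 1 \<noteq> h" "i \<in> {1..n}" "{a (j+1)..a (j+2)} \<subseteq> lap i"
  shows "i = gap_lap j"
proof -
  note l = gap_lap[OF assms(1,2)]
  have "a (j+1) < a (j+2)"
    using l lap_lo_less_hi by metis
  then have "lap_lo i \<le> a (j+1)" "a (j+1) < lap_hi i"
    using assms(4) unfolding lap_eq by auto
  then show ?thesis
    using lap_eq_if_starts_at[OF assms(3) l(1)] l(2) by simp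
qed

definition lap_weight :: "real \<Rightarrow> nat \<Rightarrow> real" where
  "lap_weight \<beta> j = (if j + 1 = h then 0 else \<bar>1 / rho (gap_lap j)\<bar> powr (-\<beta>))"

lemma Qmat_carrier: "Qmat rho vrho c d a n \<beta> \<in> carrier_mat (n+1) (n+1)"
  unfolding Qmat_def Let_def length_plist by simp

lemma Qmat_index:
  assumes "i \<le> n" "j \<le> n"
  shows "Qmat rho vrho c d a n \<beta> $$ (i, j) = lap_weight \<beta> j"
proof -
  have P: "plist rho vrho c d a n ! i = a (i+1)" "plist rho vrho c d a n ! Suc i = a (i+2)"
    "plist rho vrho c d a n ! j = a (j+1)" "plist rho vrho c d a n ! Suc j = a (j+2)"
    using nth_plist[of i] nth_plist[of "Suc i"] nth_plist[of j] nth_plist[of "Suc j"] assms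
    by simp_all
  let ?lap_of_gap = "SOME l. l \<in> {1..n} \<and> {a (j+1)..a (j+2)} \<subseteq> ifs rho vrho l ` {c..d}"
  have "Qmat rho vrho c d a n \<beta> $$ (i, j) =
      (if {a (i+1)<..<a (i+2)} \<subseteq> Fimg rho vrho c d n {a (j+1)<..<a (j+2)}
       then \<bar>1 / rho ?lap_of_gap\<bar> powr (-\<beta>) else 0)"
    unfolding Qmat_def Let_def length_plist using assms by (simp add: P)
  moreover have "?lap_of_gap = gap_lap j" if "j + 1 \<noteq> h"
  proof (rule some_equality)
    show "gap_lap j \<in> {1..n} \<and> {a (j+1)..a (j+2)} \<subseteq> ifs rho vrho (gap_lap j) ` {c..d}"
      using gap_lap[OF assms(2) that] lap_eq unfolding lap_def by simp
  qed (use gap_lap_unique[OF assms(2) that] in \<open>auto simp: lap_def\<close>)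
  ultimately show ?thesis
    unfolding gap_covered_iff[OF assms] lap_weight_def by simp
qed

lemma pairAt_ylist: "pairAt a n (ylist rho vrho c d a n) r \<longleftrightarrow> odd r \<and> r < 2*n+1"
proof
  assume pair: "pairAt a n (ylist rho vrho c d a n) r"
  then have "r < 2*n+1"
    unfolding pairAt_def length_ylist by simp
  moreover have "snd (ypt r) = -1"
    using pair \<open>r < 2*n+1\<close> unfolding pairAt_def by (simp add: nth_ylist)
  ultimately show "odd r \<and> r < 2*n+1"
    unfolding ypt_def by (auto split: if_splits)
next
  assume "odd r \<and> r < 2*n+1"
  then obtain t where t: "r = 2*t+1" "t < n"
    by (auto elim!: oddE)
  then have "ylist rho vrho c d a n ! r = (a (t+2), -1)"
    "ylist rho vrho c d a n ! Suc r = (a (t+2), 1)"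
    using nth_ylist[of r] nth_ylist[of "Suc r"] ypt_odd[of t] ypt_even[of "t+1"] by simp_all
  then show "pairAt a n (ylist rho vrho c d a n) r"
    unfolding pairAt_def length_ylist using t by force
qed

lemma Vmat_carrier: "Vmat rho vrho c d a n \<beta> \<in> carrier_mat (2*n+2) (2*n+2)"
  unfolding Vmat_def Let_def length_ylist by simp

lemma Vmat_index:
  assumes "r < 2*n+2" "k < 2*n+2"
  shows "Vmat rho vrho c d a n \<beta> $$ (r, k) =
    (if k div 2 + 1 = h then 0
     else pair_pattern (2*n+1) (target k) k r
            (sgn (rho (gap_lap (k div 2))) * \<bar>1 / rho (gap_lap (k div 2))\<bar> powr (-\<beta>)))"
proof (cases "k div 2 + 1 = h")
  case True
  then have "(\<exists>i<2*n+2. Fpt rho vrho c d a n (ylist rho vrho c d a n ! k)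
      = Some (ylist rho vrho c d a n ! i)) \<longleftrightarrow> False"
    using Fpt_ypt(1)[OF assms(2)] nth_ylist[OF assms(2)] by simp
  then show ?thesis
    unfolding Vmat_def Let_def length_ylist index_mat(1)[OF assms] prod.case
    using True by (simp only: if_False) simp
next
  case False
  let ?Y = "ylist rho vrho c d a n"
  have F: "Fpt rho vrho c d a n (?Y ! k) = Some (?Y ! target k)"
    using Fpt_ypt(1)[OF assms(2)] False nth_ylist assms(2) target_less by simp
  then have ex: "(\<exists>i<2*n+2. Fpt rho vrho c d a n (?Y ! k) = Some (?Y ! i)) \<longleftrightarrow> True"
    using target_less by blast
  have the: "(THE i. i < 2*n+2 \<and> Fpt rho vrho c d a n (?Y ! k) = Some (?Y ! i)) = target k"
  proof (rule the_equality)
    fix i assume "i < 2*n+2 \<and> Fpt rho vrho c d a n (?Y ! k) = Some (?Y ! i)"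
    then show "i = target k"
      using F target_less ypt_eq_iff nth_ylist by auto
  qed (use F target_less in simp)
  have idx: "lapidx rho vrho c d n (?Y ! k) = gap_lap (k div 2)"
    using Fpt_ypt(2)[OF assms(2) False] nth_ylist[OF assms(2)] by simp
  show ?thesis
    unfolding Vmat_def Let_def length_ylist index_mat(1)[OF assms] prod.case
    by (simp only: ex the idx pairAt_ylist if_True) (use False in \<open>simp add: pair_pattern_def\<close>)
qed

lemma Vmat_column_difference:
  assumes "r < 2*n+2" "j \<le> n"
  shows "Vmat rho vrho c d a n \<beta> $$ (r, 2*j+1) - Vmat rho vrho c d a n \<beta> $$ (r, 2*j)
    = (if even r then -1 else 1) * lap_weight \<beta> j"
proof (cases "j + 1 = h")
  case True
  then show ?thesis
    using assms by (simp add: Vmat_index lap_weight_def)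
next
  case False
  define l where "l = gap_lap j"
  define w where "w = \<bar>1 / rho l\<bar> powr (-\<beta>)"
  have V: "Vmat rho vrho c d a n \<beta> $$ (r, 2*j+1) = pair_pattern (2*n+1) (target (2*j+1)) (2*j+1) r (sgn (rho l) * w)"
    "Vmat rho vrho c d a n \<beta> $$ (r, 2*j) = pair_pattern (2*n+1) (target (2*j)) (2*j) r (sgn (rho l) * w)"
    using assms False by (simp_all add: Vmat_index l_def w_def)
  have sign: "(if even r then -1 else 1) = - ((-1) ^ r :: real)"
    by simp
  have "0 < rho l \<or> rho l < 0"
    using rho_nonzero gap_lap[OF assms(2) False] unfolding l_def by force
  then show ?thesis
  proof
    assume "0 < rho l"
    then have "target (2*j) = 0" "target (2*j+1) = 2*n+1"
      unfolding target_def l_def by simp_all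
    then show ?thesis
      unfolding V sign lap_weight_def
      using assms \<open>0 < rho l\<close> False
      by (simp add: pair_pattern_to_first pair_pattern_to_last w_def l_def)
  next
    assume "rho l < 0"
    then have "target (2*j) = 2*n+1" "target (2*j+1) = 0"
      unfolding target_def l_def by simp_all
    then show ?thesis
      unfolding V sign lap_weight_def
      using assms \<open>rho l < 0\<close> False
      by (simp add: pair_pattern_to_first pair_pattern_to_last w_def l_def)
  qed
qed

lemma Bmat_Qmat_eq_Vmat_Bmat:
  "Bmat rho vrho c d a n * Qmat rho vrho c d a n \<beta> = Vmat rho vrho c d a n \<beta> * Bmat rho vrho c d a n"
proof (rule eq_matI)
  fix r j
  assume "r < dim_row (Vmat rho vrho c d a n \<beta> * Bmat rho vrho c d a n)"
    "j < dim_col (Vmat rho vrho c d a n \<beta> * Bmat rho vrho c d a n)"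
  then have r: "r < 2*(n+1)" and j: "j < n+1"
    using carrier_matD[OF Vmat_carrier[of \<beta>]] by (simp_all add: Bmat_eq boundary_mat_def)
  have "(Bmat rho vrho c d a n * Qmat rho vrho c d a n \<beta>) $$ (r, j)
      = (if even r then -1 else 1) * lap_weight \<beta> j"
    unfolding Bmat_eq boundary_mat_mult_index[OF Qmat_carrier r j] using r j by (simp add: Qmat_index)
  also have "\<dots> = (Vmat rho vrho c d a n \<beta> * Bmat rho vrho c d a n) $$ (r, j)"
  proof -
    have "Vmat rho vrho c d a n \<beta> \<in> carrier_mat (2*n+2) (2*(n+1))" "r < 2*n+2" "j \<le> n"
      using Vmat_carrier r j by simp_all
    then show ?thesis
      unfolding Bmat_eq by (simp only: mult_boundary_mat_index Vmat_column_difference j)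
  qed
  finally show "(Bmat rho vrho c d a n * Qmat rho vrho c d a n \<beta>) $$ (r, j)
      = (Vmat rho vrho c d a n \<beta> * Bmat rho vrho c d a n) $$ (r, j)" .
qed (use carrier_matD[OF Vmat_carrier[of \<beta>]] carrier_matD[OF Qmat_carrier[of \<beta>]] in
      \<open>simp_all add: Bmat_eq boundary_mat_def\<close>)

end

theorem lemma1:
  fixes n :: nat and rho vrho :: "nat \<Rightarrow> real" and c d :: real
    and a :: "nat \<Rightarrow> real" and h :: nat and \<beta> :: real
  assumes "n \<ge> 1"
    and "\<forall>i\<in>{1..n}. 0 < \<bar>rho i\<bar> \<and> \<bar>rho i\<bar> < 1"
    and "\<exists>U::real set. open U \<and> U \<noteq> {} \<and> (\<forall>i\<in>{1..n}. ifs rho vrho i ` U \<subseteq> U)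
           \<and> (\<forall>i\<in>{1..n}. \<forall>j\<in>{1..n}. i \<noteq> j \<longrightarrow> ifs rho vrho i ` U \<inter> ifs rho vrho j ` U = {})"
    and "c \<le> d"
    and "strict_mono_on {1..n+2} a"
    and "h \<in> {1..n+1}"
    and "{c..d} = {a h<..<a (h+1)} \<union> (\<Union>i\<in>{1..n}. ifs rho vrho i ` {c..d})"
    and "\<forall>i\<in>{1..n}. \<forall>j\<in>{1..n}. i \<noteq> j \<longrightarrow>
           interior (ifs rho vrho i ` {c..d}) \<inter> interior (ifs rho vrho j ` {c..d}) = {}"
    and "\<forall>i\<in>{1..n}. {a h<..<a (h+1)} \<inter> ifs rho vrho i ` {c..d} = {}"
    and "a ` {1..n+2} = {a h, a (h+1)} \<union> (\<Union>i\<in>{1..n}. {ifs rho vrho i c, ifs rho vrho i d})"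
    and "\<forall>p\<in>endpts a n. finite (orbit rho vrho c d a n p)"
  shows "Bmat rho vrho c d a n * Qmat rho vrho c d a n \<beta> = Vmat rho vrho c d a n \<beta> * Bmat rho vrho c d a n"
proof -
  interpret ifs_with_hole n rho vrho c d a h
    using assms(2,5-10) by unfold_locales auto
  show ?thesis
    by (rule Bmat_Qmat_eq_Vmat_Bmat)
qed

end
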